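(* For every $p\ge1$, the operator $T$ defined on measurable functions $u$ on $[0,1]$ by $Tu(x)=x\,u(\tfrac1x-m)$ for $x\in(\tfrac1{m+1},\tfrac1m]$, $m\ge1$ (i.e. $Tu(x)=x\,u(\{1/x\})$, $\{\cdot\}$ the fractional part), is a bounded operator on $L^p\big([0,1],\tfrac{dx}{2\sqrt{x(1-x)}}\big)$, and its spectral radius on this space is at most $(\sqrt5-1)/2$. *)

theory Defs
  imports "HOL-Analysis.Analysis"
begin

definition mu :: "real measure" where
  "mu = density lborel
     (\<lambda>x. ennreal (indicator {0..1} x / (2 * sqrt (x * (1 - x)))))"

text \<open>The operator T u (x) = x u({1/x}) for x in (0,1]; complex scalars
  (spectral theory is done over the complex field).\<close>
definition Top :: "(real \<Rightarrow> complex) \<Rightarrow> real \<Rightarrow> complex" where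
  "Top u x = (if 0 < x \<and> x \<le> 1 then complex_of_real x * u (frac (1 / x)) else 0)"

definition in_Lp :: "real \<Rightarrow> (real \<Rightarrow> complex) \<Rightarrow> bool" where
  "in_Lp p u \<longleftrightarrow> u \<in> borel_measurable mu \<and>
     (\<integral>\<^sup>+ x. ennreal (cmod (u x) powr p) \<partial>mu) < \<infinity>"

definition Lp_norm :: "real \<Rightarrow> (real \<Rightarrow> complex) \<Rightarrow> real" where
  "Lp_norm p u = (enn2real (\<integral>\<^sup>+ x. ennreal (cmod (u x) powr p) \<partial>mu)) powr (1 / p)"

definition bounded_on_Lp :: "real \<Rightarrow> ((real \<Rightarrow> complex) \<Rightarrow> real \<Rightarrow> complex) \<Rightarrow> bool" where
  "bounded_on_Lp p S \<longleftrightarrow> (\<exists>C. \<forall>u. in_Lp p u \<longrightarrow>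
      in_Lp p (S u) \<and> Lp_norm p (S u) \<le> C * Lp_norm p u)"

text \<open>S is invertible on L^p(mu), with functions identified a.e.: injective modulo
  null functions and surjective modulo a.e. equality (the inverse is then bounded
  by the open mapping theorem).\<close>
definition invertible_on_Lp :: "real \<Rightarrow> ((real \<Rightarrow> complex) \<Rightarrow> real \<Rightarrow> complex) \<Rightarrow> bool" where
  "invertible_on_Lp p S \<longleftrightarrow>
     (\<forall>u. in_Lp p u \<and> (AE x in mu. S u x = 0) \<longrightarrow> (AE x in mu. u x = 0)) \<and>
     (\<forall>f. in_Lp p f \<longrightarrow> (\<exists>u. in_Lp p u \<and> (AE x in mu. S u x = f x)))"

definition Lp_spectrum :: "real \<Rightarrow> ((real \<Rightarrow> complex) \<Rightarrow> real \<Rightarrow> complex) \<Rightarrow> complex set" where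
  "Lp_spectrum p S = {l. \<not> invertible_on_Lp p (\<lambda>u x. S u x - l * u x)}"

definition Lp_spectral_radius :: "real \<Rightarrow> ((real \<Rightarrow> complex) \<Rightarrow> real \<Rightarrow> complex) \<Rightarrow> ereal" where
  "Lp_spectral_radius p S = (SUP l\<in>Lp_spectrum p S. ereal (cmod l))"

end

theory Submission
  imports Defs
begin

text \<open>Write \<open>g = (sqrt 5 - 1) / 2\<close>, \<open>\<rho>\<close> for the density of \<open>mu\<close> and
  \<open>x\<^sub>n = 1 / (n + y)\<close>, \<open>n \<ge> 1\<close>, for the inverse branches of the Gauss map.
  The weight \<open>h x = (1 + (x - g)\<^sup>2) / (1 + g + x)\<close> satisfies \<open>1/3 \<le> h \<le> 1\<close>,
  \<open>x\<^sub>n h x\<^sub>n \<le> g h y\<close> and the explicit inequality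
  \<open>\<Sum>\<^sub>n (x\<^sub>n h x\<^sub>n / (g h y)) \<rho> x\<^sub>n x\<^sub>n\<^sup>2 \<le> \<rho> y\<close> on \<open>(0,1)\<close>
  (the branches \<open>n = 1, 2\<close> are estimated by hand, the others telescope).
  Since the ratio \<open>x\<^sub>n h x\<^sub>n / (g h y)\<close> is at most one, it may be raised to the power \<open>p\<close>,
  and a change of variables on every branch turns the inequality into
  \<open>W (T u) \<le> g\<^sup>p W u\<close> for \<open>W u = \<integral> h\<^sup>p |u|\<^sup>p d mu\<close>, a functional comparable to
  \<open>\<parallel>u\<parallel>\<^sub>p\<^sup>p\<close>. Hence \<open>T\<close> is bounded, and for \<open>|\<lambda>| > g\<close> the operator \<open>T - \<lambda>\<close> is
  injective, since an eigenfunction has \<open>|\<lambda>|\<^sup>p W u = W (T u) \<le> g\<^sup>p W u\<close>, and surjective: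
  for \<open>g < r < |\<lambda>|\<close> the bound \<open>\<Sum>\<^sub>n W (T\<^sup>n f) / r\<^sup>n\<^sup>p < \<infinity>\<close> makes the
  Neumann series \<open>-\<Sum>\<^sub>n T\<^sup>n f / \<lambda>\<^sup>n\<^sup>+\<^sup>1\<close> converge almost everywhere, with a sum in
  \<open>L\<^sup>p\<close>.\<close>

definition golden_conj :: real where
  "golden_conj = (sqrt 5 - 1) / 2"

lemma golden_conj_sq: "golden_conj\<^sup>2 = 1 - golden_conj"
proof -
  have "sqrt 5 * sqrt 5 = 5" by simp
  then show ?thesis unfolding golden_conj_def by (simp add: power2_eq_square field_simps)
qed

lemma golden_conj_mult_one_plus: "golden_conj * (1 + golden_conj) = 1"
  using golden_conj_sq by (simp add: power2_eq_square algebra_simps)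

lemma golden_conj_bounds: "309/500 \<le> golden_conj" "golden_conj \<le> 6181/10000"
proof -
  have "2236/1000 \<le> sqrt 5" by (rule real_le_rsqrt) (simp add: power2_eq_square)
  then show "309/500 \<le> golden_conj" unfolding golden_conj_def by simp
  have "sqrt 5 \<le> 22362/10000" by (rule real_le_lsqrt) (auto simp add: power2_eq_square)
  then show "golden_conj \<le> 6181/10000" unfolding golden_conj_def by simp
qed

lemma golden_conj_pos: "0 < golden_conj"
  using golden_conj_bounds(1) by simp

definition weight_num :: "real \<Rightarrow> real" where
  "weight_num x = 1 + (x - golden_conj)\<^sup>2"

text \<open>Off \<open>[0,1]\<close>, where \<open>mu\<close> vanishes, the value of the weight is irrelevant; \<open>1/2\<close>
  keeps its bounds global.\<close>
definition weight :: "real \<Rightarrow> real" where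
  "weight x = (if 0 \<le> x \<and> x \<le> 1 then weight_num x / (1 + golden_conj + x) else 1/2)"

lemma weight_num_ge_one: "1 \<le> weight_num x"
  unfolding weight_num_def by simp

lemma weight_bounds: "1/3 \<le> weight x" "weight x \<le> 1"
proof -
  have "1/3 \<le> weight x \<and> weight x \<le> 1"
  proof (cases "0 \<le> x \<and> x \<le> 1")
    case True
    have "\<bar>x - golden_conj\<bar> \<le> 7/10"
      unfolding abs_le_iff using True golden_conj_bounds by linarith
    then have "(x - golden_conj)\<^sup>2 \<le> (7/10)\<^sup>2"
      using power2_mono[of "x - golden_conj" "7/10"] by simp
    then have "weight_num x \<le> 3/2" unfolding weight_num_def by (simp add: power2_eq_square)
    moreover have "0 < 1 + golden_conj + x" using True golden_conj_pos by simp
    ultimately show ?thesis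
      using weight_num_ge_one[of x] True golden_conj_bounds
      unfolding weight_def by (simp add: divide_le_eq le_divide_eq)
  qed (auto simp: weight_def)
  then show "1/3 \<le> weight x" "weight x \<le> 1" by auto
qed

lemma weight_pos: "0 < weight x"
  using weight_bounds(1)[of x] by linarith

lemma weight_measurable [measurable]: "weight \<in> borel_measurable borel"
  unfolding weight_def weight_num_def by measurable

subsection \<open>Estimates along the inverse branches of the Gauss map\<close>

definition branch_ratio :: "real \<Rightarrow> real \<Rightarrow> real" where
  "branch_ratio n y = (1 / (n + y)) * weight (1 / (n + y)) / (golden_conj * weight y)"

lemma branch_ratio_eq:
  assumes "1 \<le> n" "0 \<le> y" "y \<le> 1"
  shows "branch_ratio n y =
    weight_num (1 / (n + y)) * (1 + golden_conj + y) / ((n + y + golden_conj) * weight_num y)"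
proof -
  define x where "x = 1 / (n + y)"
  have ny: "0 < n + y" using assms by simp
  have x: "0 < x" "x \<le> 1" using assms unfolding x_def by (auto simp: field_simps)
  have "golden_conj * (1 + golden_conj + x) / x
      = golden_conj * (1 + golden_conj) * (n + y) + golden_conj"
    using ny unfolding x_def by (simp add: field_simps)
  also have "\<dots> = n + y + golden_conj"
    unfolding golden_conj_mult_one_plus by simp
  finally have denom: "golden_conj * (1 + golden_conj + x) / x = n + y + golden_conj" .
  have "branch_ratio n y = a * (1 + golden_conj + y) / ((golden_conj * (1 + golden_conj + x) / x) * b)"
    if "weight x = a / (1 + golden_conj + x)" "weight y = b / (1 + golden_conj + y)" "0 < b" for a b
  proof -
    have "0 < 1 + golden_conj + x" "0 < 1 + golden_conj + y"
      using x assms golden_conj_pos by auto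
    then show ?thesis
      using \<open>0 < b\<close> x golden_conj_pos
      unfolding branch_ratio_def x_def[symmetric] that by (simp add: field_simps)
  qed
  from this[of "weight_num x" "weight_num y"] show ?thesis
    using x assms weight_num_ge_one[of y] unfolding denom by (simp add: weight_def x_def)
qed

lemma weight_num_le: "\<bar>x - golden_conj\<bar> \<le> c \<Longrightarrow> weight_num x \<le> 1 + c\<^sup>2"
  unfolding weight_num_def using power2_mono[of "x - golden_conj" c] by simp

lemma weight_num_first_branch:
  assumes "0 \<le> y"
  shows "weight_num (1 / (1 + y)) = 1 + golden_conj\<^sup>2 * (y - golden_conj)\<^sup>2 / (1 + y)\<^sup>2"
proof -
  have "1 / (1 + y) - golden_conj = golden_conj * (golden_conj - y) / (1 + y)"
    using assms golden_conj_sq by (simp add: field_simps power2_eq_square)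
  then show ?thesis
    unfolding weight_num_def by (simp add: power2_eq_square field_simps)
qed

lemma weight_num_second_branch_le:
  assumes "0 \<le> y" "y \<le> 1"
  shows "weight_num (1 / (2 + y)) \<le> 10812/10000"
proof -
  have "1/3 \<le> 1 / (2 + y)" "1 / (2 + y) \<le> 1/2" using assms by (auto simp: field_simps)
  then have "\<bar>1 / (2 + y) - golden_conj\<bar> \<le> 2848/10000"
    unfolding abs_le_iff using golden_conj_bounds by linarith
  from weight_num_le[OF this] show ?thesis by (simp add: power2_eq_square)
qed

lemma weight_num_far_branch_le:
  assumes "3 \<le> n" "0 \<le> y"
  shows "weight_num (1 / (n + y)) \<le> 13821/10000"
proof -
  have "0 \<le> 1 / (n + y)" "1 / (n + y) \<le> 1/3" using assms by (auto simp: field_simps)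
  then have "\<bar>1 / (n + y) - golden_conj\<bar> \<le> 6181/10000"
    unfolding abs_le_iff using golden_conj_bounds by linarith
  from weight_num_le[OF this] show ?thesis by (simp add: power2_eq_square)
qed

lemma branch_ratio_nonneg:
  assumes "1 \<le> n" "0 \<le> y" "y \<le> 1"
  shows "0 \<le> branch_ratio n y"
  using assms weight_num_ge_one[of y] weight_num_ge_one[of "1 / (n + y)"] golden_conj_pos
  by (simp add: branch_ratio_eq)

lemma branch_ratio_le_one:
  assumes n: "1 \<le> n" and y: "0 \<le> y" "y \<le> 1"
  shows "branch_ratio (real n) y \<le> 1"
proof -
  define ex where "ex = weight_num (1 / (real n + y))"
  define ey where "ey = weight_num y"
  have ey: "1 \<le> ey" unfolding ey_def by (rule weight_num_ge_one)
  have "ex * (1 + golden_conj + y) \<le> (real n + y + golden_conj) * ey"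
  proof -
    consider "n = 1" | "n = 2" | "3 \<le> n" using n by linarith
    then show ?thesis
    proof cases
      case 1
      have "golden_conj\<^sup>2 * (y - golden_conj)\<^sup>2 \<le> (1 + y)\<^sup>2 * (y - golden_conj)\<^sup>2"
        using y golden_conj_bounds by (intro mult_right_mono power_mono) auto
      then have "golden_conj\<^sup>2 * (y - golden_conj)\<^sup>2 / (1 + y)\<^sup>2 \<le> (y - golden_conj)\<^sup>2"
        using y by (simp add: divide_le_eq mult.commute)
      moreover have "ex = 1 + golden_conj\<^sup>2 * (y - golden_conj)\<^sup>2 / (1 + y)\<^sup>2"
        using 1 weight_num_first_branch[OF y(1)] unfolding ex_def by (simp add: add.commute)
      ultimately have "ex \<le> ey" unfolding ey_def weight_num_def by simp
      then have "ex * (1 + golden_conj + y) \<le> ey * (1 + golden_conj + y)"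
        using y golden_conj_pos by (intro mult_right_mono) auto
      then show ?thesis using 1 by (simp add: algebra_simps)
    next
      case 2
      have "ex * (1 + golden_conj + y) \<le> 10812/10000 * (1 + golden_conj + y)"
        using 2 y golden_conj_pos weight_num_second_branch_le[OF y]
        unfolding ex_def by (intro mult_right_mono) auto
      also have "\<dots> \<le> real n + y + golden_conj" using 2 y golden_conj_bounds by simp
      also have "\<dots> \<le> (real n + y + golden_conj) * ey" using ey y golden_conj_pos by simp
      finally show ?thesis .
    next
      case 3
      have "ex * (1 + golden_conj + y) \<le> 13821/10000 * (1 + golden_conj + y)"
        using 3 y golden_conj_pos weight_num_far_branch_le[of "real n" y]
        unfolding ex_def by (intro mult_right_mono) auto
      also have "\<dots> \<le> real n + y + golden_conj" using 3 y golden_conj_bounds by simp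
      also have "\<dots> \<le> (real n + y + golden_conj) * ey" using ey y golden_conj_pos by simp
      finally show ?thesis .
    qed
  qed
  moreover have "0 < (real n + y + golden_conj) * ey" using n y ey golden_conj_pos by simp
  moreover have "branch_ratio (real n) y = ex * (1 + golden_conj + y) / ((real n + y + golden_conj) * ey)"
    using n y unfolding ex_def ey_def by (simp add: branch_ratio_eq)
  ultimately show ?thesis by simp
qed

definition branch_term :: "real \<Rightarrow> nat \<Rightarrow> real" where
  "branch_term y m =
    branch_ratio (real (Suc m)) y / ((real (Suc m) + y) * sqrt (real (Suc m) + y - 1))"

lemma branch_term_nonneg:
  assumes "0 \<le> y" "y \<le> 1"
  shows "0 \<le> branch_term y m"
  using branch_ratio_nonneg[of "real (Suc m)" y] assms unfolding branch_term_def by simp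

text \<open>The polynomial inequalities below are proved by exhibiting the difference of both sides
  in the Bernstein basis of \<open>[0,1]\<close> with nonnegative coefficients.\<close>

lemma second_branch_poly_le:
  assumes "0 \<le> y" "y \<le> (1::real)"
  shows "16181/10000 + y \<le> (31/100 - 69/500*y) * (2618/1000 + y) * (2 + y) * (1 + 41/100*y)"
proof -
  have "25000000 * ((31/100 - 69/500*y) * (2618/1000 + y) * (2 + y) * (1 + 41/100*y) - (16181/10000 + y))
    = 126500*(1-y)^4 + 9868690*y*(1-y)^3 + 27932343*y^2*(1-y)^2 + 19959955*y^3*(1-y) + 355302*y^4"
    (is "_ * (?A - ?B) = ?C") by (simp add: field_simps, algebra)
  moreover have "0 \<le> ?C"
    using assms by (intro add_nonneg_nonneg mult_nonneg_nonneg) auto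
  ultimately have "0 \<le> 25000000 * (?A - ?B)" by simp
  then show ?thesis by (simp only: zero_le_mult_iff) simp
qed

lemma branch_term_second_le:
  assumes y: "0 \<le> y" "y \<le> 1"
  shows "branch_term y 1 \<le> 541/500 * (31/100 - 69/500*y) / weight_num y"
proof -
  define ex where "ex = weight_num (1 / (2 + y))"
  define ey where "ey = weight_num y"
  define D where "D = (2618/1000 + y) * (2 + y) * (1 + 41/100*y)"
  have ey: "1 \<le> ey" unfolding ey_def by (rule weight_num_ge_one)
  have ex: "0 \<le> ex" "ex \<le> 10812/10000"
    using weight_num_second_branch_le[OF y] weight_num_ge_one[of "1 / (2 + y)"]
    unfolding ex_def by auto
  have D: "0 < D" unfolding D_def using y by simp
  have sqrt_ge: "1 + 41/100*y \<le> sqrt (1 + y)"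
  proof (rule real_le_rsqrt)
    have "y * y \<le> y" using y mult_left_le[of y y] by simp
    then show "(1 + 41/100*y)\<^sup>2 \<le> 1 + y" using y by (simp add: power2_eq_square algebra_simps)
  qed
  have "branch_term y 1 = ex * (1 + golden_conj + y) / ((2 + y + golden_conj) * ey) / ((2 + y) * sqrt (1 + y))"
    using y unfolding branch_term_def ex_def ey_def by (simp add: branch_ratio_eq add.commute)
  also have "\<dots> \<le> 10812/10000 * (16181/10000 + y) / ((2618/1000 + y) * ey)
      / ((2 + y) * (1 + 41/100*y))"
    using y ex ey sqrt_ge golden_conj_bounds
    by (intro frac_le mult_mono mult_pos_pos divide_nonneg_pos mult_nonneg_nonneg) auto
  also have "\<dots> = 10812/10000 * ((16181/10000 + y) / D) / ey"
    using ey y unfolding D_def by (simp add: field_simps)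
  also have "\<dots> \<le> 10812/10000 * (31/100 - 69/500*y) / ey"
    using second_branch_poly_le[OF y] D ey
    by (intro divide_right_mono mult_left_mono) (auto simp: D_def divide_le_eq mult.assoc)
  also have "\<dots> \<le> 541/500 * (31/100 - 69/500*y) / ey"
    using ey y by (intro divide_right_mono mult_right_mono) auto
  finally show ?thesis unfolding ey_def .
qed

lemma far_branch_factor_le:
  assumes n: "3 \<le> n"
  shows "1 / ((n + golden_conj) * n * sqrt (n - 1)) \<le> (49/125) / (n * (n - 1))"
proof -
  have "n - 1 \<le> 4343409/3906250 * (n - 3) + 7857226881/3906250000"
    using n by (simp add: field_simps)
  also have "\<dots> \<le> 2401/15625 * (n - 3)\<^sup>2 + 4343409/3906250 * (n - 3) + 7857226881/3906250000"
    by simp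
  also have "\<dots> = (49/125 * (n + 309/500))\<^sup>2"
    by (simp add: power2_eq_square field_simps)
  also have "\<dots> \<le> (49/125 * (n + golden_conj))\<^sup>2"
    using n golden_conj_bounds by (intro power_mono) auto
  finally have "sqrt (n - 1) \<le> 49/125 * (n + golden_conj)"
    using n golden_conj_pos by (intro real_le_lsqrt) auto
  then have "sqrt (n - 1) * sqrt (n - 1) \<le> 49/125 * (n + golden_conj) * sqrt (n - 1)"
    using n by (intro mult_right_mono) auto
  then have "n - 1 \<le> 49/125 * (n + golden_conj) * sqrt (n - 1)" using n by simp
  then have "n * (n - 1) \<le> n * (49/125 * (n + golden_conj) * sqrt (n - 1))"
    using n by (intro mult_left_mono) auto
  then have "n * (n - 1) \<le> 49/125 * ((n + golden_conj) * n * sqrt (n - 1))"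
    by (simp add: algebra_simps)
  moreover have "0 < (n + golden_conj) * n * sqrt (n - 1)" using n golden_conj_pos by simp
  ultimately show ?thesis using n by (simp add: field_simps)
qed

lemma branch_term_far_le:
  assumes y: "0 \<le> y" "y \<le> 1"
  shows "branch_term y (m + 2)
    \<le> 13821/10000 * (16181/10000 + y) / weight_num y * (49/125) * (1 / (real m + 2) - 1 / (real m + 3))"
proof -
  define n where "n = real (m + 3)"
  define ex where "ex = weight_num (1 / (n + y))"
  define ey where "ey = weight_num y"
  define A where "A = 13821/10000 * (16181/10000 + y) / ey"
  have n: "3 \<le> n" unfolding n_def by simp
  have ey: "1 \<le> ey" unfolding ey_def by (rule weight_num_ge_one)
  have ex: "0 \<le> ex" "ex \<le> 13821/10000"
    using weight_num_far_branch_le[OF n y(1)] weight_num_ge_one[of "1 / (n + y)"]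
    unfolding ex_def by auto
  have A: "0 \<le> A" unfolding A_def using y ey by simp
  have "branch_ratio n y = ex * (1 + golden_conj + y) / ((n + y + golden_conj) * ey)"
    using n y unfolding ex_def ey_def by (simp add: branch_ratio_eq)
  also have "\<dots> \<le> 13821/10000 * (16181/10000 + y) / ((n + golden_conj) * ey)"
    using ex ey y n golden_conj_bounds by (intro frac_le mult_mono mult_pos_pos) auto
  also have "\<dots> = A / (n + golden_conj)" unfolding A_def using ey n golden_conj_pos by simp
  finally have ratio: "branch_ratio n y \<le> A / (n + golden_conj)" .
  have "n * sqrt (n - 1) \<le> (n + y) * sqrt (n + y - 1)" using n y by (intro mult_mono) auto
  then have "branch_term y (m + 2) \<le> (A / (n + golden_conj)) / (n * sqrt (n - 1))"
    using ratio n y A golden_conj_pos branch_ratio_nonneg[of n y]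
    unfolding branch_term_def n_def by (intro frac_le) (auto simp: add.commute)
  also have "\<dots> = A * (1 / ((n + golden_conj) * n * sqrt (n - 1)))" by simp
  also have "\<dots> \<le> A * ((49/125) / (n * (n - 1)))"
    using far_branch_factor_le[OF n] A by (rule mult_left_mono)
  also have "\<dots> = A * (49/125) * (1 / (real m + 2) - 1 / (real m + 3))"
    unfolding n_def by (simp add: field_simps)
  finally show ?thesis unfolding A_def ey_def .
qed

text \<open>An upper bound for \<open>weight_num y\<close> times the sum of the branch terms with \<open>n \<ge> 2\<close>.\<close>
definition tail_bound :: "real \<Rightarrow> real" where
  "tail_bound y = 541/500 * (31/100 - 69/500*y) + 691/2500 * (16181/10000 + y)"

lemma sums_inverse_telescope: "(\<lambda>m. 1 / (real m + 2) - 1 / (real m + 3)) sums (1/2)"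
proof -
  have "(\<lambda>m. 1 / (real m + 2)) \<longlonglongrightarrow> 0"
    using LIMSEQ_ignore_initial_segment[OF lim_1_over_n, of 2] by (simp add: add.commute)
  from telescope_sums'[OF this] show ?thesis by (simp add: add.commute)
qed

lemma branch_term_tail:
  assumes y: "0 \<le> y" "y \<le> 1"
  shows "summable (\<lambda>m. branch_term y (Suc m))"
    and "(\<Sum>m. branch_term y (Suc m)) \<le> tail_bound y / weight_num y"
proof -
  define B where "B = 13821/10000 * (16181/10000 + y) / weight_num y * (49/125)"
  have B: "0 \<le> B" unfolding B_def using y weight_num_ge_one[of y] by simp
  have far: "branch_term y (m + 2) \<le> B * (1 / (real m + 2) - 1 / (real m + 3))" for m
    using branch_term_far_le[OF y] unfolding B_def .
  have tele: "(\<lambda>m. B * (1 / (real m + 2) - 1 / (real m + 3))) sums (B * (1/2))"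
    by (rule sums_mult[OF sums_inverse_telescope])
  have far_summable: "summable (\<lambda>m. branch_term y (m + 2))"
    by (rule summable_comparison_test[OF _ sums_summable[OF tele]])
      (use far branch_term_nonneg[OF y] in auto)
  then show summable: "summable (\<lambda>m. branch_term y (Suc m))"
    using summable_Suc_iff[of "\<lambda>m. branch_term y (Suc m)"] by simp
  have "(\<Sum>m. branch_term y (Suc m)) = (\<Sum>m. branch_term y (m + 2)) + branch_term y 1"
    using suminf_split_head[OF summable] by (simp add: numeral_2_eq_2)
  also have "\<dots> \<le> B * (1/2) + 541/500 * (31/100 - 69/500*y) / weight_num y"
    using suminf_le[OF far far_summable sums_summable[OF tele]] sums_unique[OF tele]
      branch_term_second_le[OF y] by simp
  also have "\<dots> \<le> tail_bound y / weight_num y"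
    using y weight_num_ge_one[of y]
    unfolding B_def tail_bound_def by (simp add: field_simps)
  finally show "(\<Sum>m. branch_term y (Suc m)) \<le> tail_bound y / weight_num y" .
qed

lemma weight_num_first_branch_le:
  assumes y: "0 \<le> y" "y \<le> 1"
  shows "weight_num (1 / (1 + y)) \<le> 1 + 191/500 * (y - golden_conj)\<^sup>2 * (1 - 3*y/4)"
proof -
  have "1 \<le> (1 - 3*y/4) * (1 + y)\<^sup>2"
  proof -
    have "(1 - 3*y/4) * (1 + y)\<^sup>2 - 1 = y * (5/4 - y/2 - 3*y\<^sup>2/4)"
      by (simp add: power2_eq_square field_simps)
    moreover have "0 \<le> y * (5/4 - y/2 - 3*y\<^sup>2/4)"
      using y power_le_one[of y 2] by (intro mult_nonneg_nonneg) auto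
    ultimately show ?thesis by linarith
  qed
  then have "1 / (1 + y)\<^sup>2 \<le> 1 - 3*y/4" using y by (simp add: field_simps)
  moreover have "golden_conj\<^sup>2 \<le> 191/500" using golden_conj_sq golden_conj_bounds by simp
  ultimately have "golden_conj\<^sup>2 * ((y - golden_conj)\<^sup>2 * (1 / (1 + y)\<^sup>2))
      \<le> 191/500 * ((y - golden_conj)\<^sup>2 * (1 - 3*y/4))"
    by (intro mult_mono) auto
  then show ?thesis unfolding weight_num_first_branch[OF y(1)] by (simp add: mult.assoc)
qed

lemma sq_dist_golden_conj_ge:
  assumes "0 \<le> y" "y \<le> 1"
  shows "(y - 309/500)\<^sup>2 - 1/5000 \<le> (y - golden_conj)\<^sup>2"
proof -
  define d where "d = golden_conj - 309/500"
  have d: "0 \<le> d" "d \<le> 1/10000" unfolding d_def using golden_conj_bounds by auto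
  have "d * (-2) \<le> d * (golden_conj + 309/500 - 2*y)"
    using d assms golden_conj_pos by (intro mult_left_mono) auto
  moreover have "(y - golden_conj)\<^sup>2 - (y - 309/500)\<^sup>2 = d * (golden_conj + 309/500 - 2*y)"
    unfolding d_def by (simp add: power2_eq_square algebra_simps)
  ultimately show ?thesis using d by linarith
qed

text \<open>With \<open>y = w\<^sup>2\<close> and \<open>t = (y - golden_conj)\<^sup>2\<close> this is the remaining inequality for the
  first branch. It is affine in \<open>t\<close> with nonnegative slope, so it suffices to check it at a
  rational lower bound for \<open>t\<close>.\<close>
lemma first_branch_poly_le:
  fixes w t :: real
  assumes w: "0 \<le> w" "w \<le> 1" and t: "(w\<^sup>2 - 309/500)\<^sup>2 - 1/5000 \<le> t"
  shows "1 + 191/500 * t * (1 - 3*w\<^sup>2/4) + w * (1 + w\<^sup>2) * tail_bound (w\<^sup>2)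
    \<le> (1 + w\<^sup>2) * (1 + t) * (1 + w\<^sup>2/2 + 3*(w\<^sup>2)\<^sup>2/8)"
proof -
  define Q where "Q s = (1 + w\<^sup>2) * (1 + s) * (1 + w\<^sup>2/2 + 3*(w\<^sup>2)\<^sup>2/8)
    - (1 + 191/500 * s * (1 - 3*w\<^sup>2/4) + w * (1 + w\<^sup>2) * tail_bound (w\<^sup>2))" for s
  define t0 where "t0 = (w\<^sup>2 - 309/500)\<^sup>2 - 1/5000"
  define K where "K = (1 + w\<^sup>2) * (1 + w\<^sup>2/2 + 3*(w\<^sup>2)\<^sup>2/8) - 191/500 * (1 - 3*w\<^sup>2/4)"
  have "500000000 * Q t0
    = 117952716*(1-w)^10 + 788195740*w*(1-w)^9 + 2494940403*w^2*(1-w)^8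
      + 5283929084*w^3*(1-w)^7 + 8376991354*w^4*(1-w)^6 + 9363979120*w^5*(1-w)^5
      + 6610881150*w^6*(1-w)^4 + 3068588868*w^7*(1-w)^3 + 1902504494*w^8*(1-w)^2
      + 1542604644*w^9*(1-w) + 731527339*w^10" (is "_ = ?C")
    unfolding Q_def t0_def tail_bound_def by (simp add: field_simps, algebra)
  moreover have "0 \<le> ?C" using w by (intro add_nonneg_nonneg mult_nonneg_nonneg) auto
  ultimately have "0 \<le> Q t0" by simp
  moreover have "Q t = Q t0 + (t - t0) * K" unfolding Q_def K_def by (simp add: field_simps)
  moreover have "0 \<le> K"
  proof -
    have "1 \<le> (1 + w\<^sup>2) * (1 + w\<^sup>2/2 + 3*(w\<^sup>2)\<^sup>2/8)" by (simp add: algebra_simps)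
    moreover have "191/500 * (1 - 3*w\<^sup>2/4) \<le> 191/500 * 1" by (intro mult_left_mono) auto
    ultimately show ?thesis unfolding K_def by linarith
  qed
  moreover have "0 \<le> t - t0" using t unfolding t0_def by simp
  ultimately have "0 \<le> Q t" by simp
  then show ?thesis unfolding Q_def by simp
qed

lemma sqrt_one_minus_mult_le_one:
  assumes "0 \<le> y" "y \<le> 1"
  shows "(1 + y/2 + 3*y\<^sup>2/8) * sqrt (1 - y) \<le> 1"
proof (rule power2_le_imp_le)
  have "((1 + y/2 + 3*y\<^sup>2/8) * sqrt (1 - y))\<^sup>2 = (1 + y/2 + 3*y\<^sup>2/8)\<^sup>2 * (1 - y)"
    using assms by (simp add: power_mult_distrib)
  also have "\<dots> = 1 - (5/8*y^3 + 15/64*y^4 + 9/64*y^5)"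
    by (simp add: power2_eq_square field_simps, algebra)
  also have "\<dots> \<le> 1"
    using assms zero_le_power[of y 3] zero_le_power[of y 4] zero_le_power[of y 5] by linarith
  finally show "((1 + y/2 + 3*y\<^sup>2/8) * sqrt (1 - y))\<^sup>2 \<le> 1\<^sup>2" by simp
qed simp

lemma first_branch_plus_tail_le:
  assumes y: "0 < y" "y < 1"
  shows "branch_term y 0 + tail_bound y / weight_num y \<le> 1 / (sqrt y * sqrt (1 - y))"
proof -
  define w where "w = sqrt y"
  define ex where "ex = weight_num (1 / (1 + y))"
  define ey where "ey = weight_num y"
  define P where "P = 1 + y/2 + 3*y\<^sup>2/8"
  have w: "0 < w" "w \<le> 1" "w\<^sup>2 = y" using y unfolding w_def by auto
  have ey: "1 \<le> ey" unfolding ey_def by (rule weight_num_ge_one)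
  have "branch_term y 0 = ex / ey / ((1 + y) * w)"
    using y golden_conj_pos unfolding branch_term_def w_def ex_def ey_def
    by (simp add: branch_ratio_eq add_ac)
  moreover have "tail_bound y / ey = w * (1 + y) * tail_bound y / ((1 + y) * w * ey)"
    using w y by simp
  ultimately have "branch_term y 0 + tail_bound y / ey
      = (ex + w * (1 + y) * tail_bound y) / ((1 + y) * w * ey)"
    by (simp add: add_divide_distrib mult.commute)
  also have "\<dots> \<le> ((1 + y) * ey * P) / ((1 + y) * w * ey)"
  proof (rule divide_right_mono)
    have "(w\<^sup>2 - 309/500)\<^sup>2 - 1/5000 \<le> (y - golden_conj)\<^sup>2"
      using sq_dist_golden_conj_ge y w by simp
    from first_branch_poly_le[OF less_imp_le[OF w(1)] w(2) this]
    have "1 + 191/500 * (y - golden_conj)\<^sup>2 * (1 - 3*y/4) + w * (1 + y) * tail_bound y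
        \<le> (1 + y) * ey * P"
      unfolding w(3) ey_def weight_num_def P_def by simp
    then show "ex + w * (1 + y) * tail_bound y \<le> (1 + y) * ey * P"
      using weight_num_first_branch_le[of y] y unfolding ex_def by simp
  qed (use w y ey in simp)
  also have "\<dots> = P / w" using y ey by simp
  also have "\<dots> \<le> 1 / (w * sqrt (1 - y))"
  proof -
    have "P * sqrt (1 - y) \<le> 1" using sqrt_one_minus_mult_le_one[of y] y unfolding P_def by simp
    then show ?thesis using y w by (simp add: field_simps)
  qed
  finally show ?thesis unfolding w_def ey_def .
qed

lemma branch_term_sums_le:
  assumes y: "0 < y" "y < 1"
  shows "summable (branch_term y)" "suminf (branch_term y) \<le> 1 / (sqrt y * sqrt (1 - y))"
proof -
  note tail = branch_term_tail[of y]
  then show summable: "summable (branch_term y)" using y by (simp add: summable_Suc_iff)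
  have "suminf (branch_term y) \<le> branch_term y 0 + tail_bound y / weight_num y"
    using suminf_split_head[OF summable] tail y by simp
  also have "\<dots> \<le> 1 / (sqrt y * sqrt (1 - y))" by (rule first_branch_plus_tail_le[OF y])
  finally show "suminf (branch_term y) \<le> 1 / (sqrt y * sqrt (1 - y))" .
qed

subsection \<open>Change of variables along the inverse branches\<close>

definition mu_density :: "real \<Rightarrow> real" where
  "mu_density x = indicator {0..1} x / (2 * sqrt (x * (1 - x)))"

lemma mu_density_nonneg: "0 \<le> mu_density x"
  by (cases "x \<in> {0..1}") (auto simp: mu_density_def)

lemma mu_density_measurable [measurable]: "mu_density \<in> borel_measurable borel"
  unfolding mu_density_def by measurable

lemma mu_eq_density: "mu = density lborel (\<lambda>x. ennreal (mu_density x))"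
  unfolding mu_def mu_density_def by simp

lemma sets_mu [measurable_cong]: "sets mu = sets borel"
  unfolding mu_eq_density by simp

lemma measurable_mu_iff:
  "(f :: real \<Rightarrow> 'a::topological_space) \<in> borel_measurable mu \<longleftrightarrow> f \<in> borel_measurable borel"
proof -
  have "measurable mu (borel :: 'a measure) = measurable borel borel"
    by (rule measurable_cong_sets) (simp_all add: sets_mu)
  then show ?thesis by simp
qed

lemma AE_mu_open_unit: "AE x in mu. 0 < x \<and> x < 1"
proof -
  have "AE x in lborel. 0 < ennreal (mu_density x) \<longrightarrow> 0 < x \<and> x < 1"
    by (intro AE_I2) (auto simp: mu_density_def indicator_def zero_less_mult_iff)
  then show ?thesis unfolding mu_eq_density by (subst AE_density) auto
qed

lemma frac_measurable [measurable]: "(frac :: real \<Rightarrow> real) \<in> borel_measurable borel"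
  unfolding frac_def[abs_def] by measurable

lemma nn_integral_inverse_branch:
  fixes H :: "real \<Rightarrow> ennreal"
  assumes [measurable]: "H \<in> borel_measurable borel" and n: "0 < n"
  shows "(\<integral>\<^sup>+x. H x * indicator {1 / (n + 1)..1 / n} x \<partial>lborel)
       = (\<integral>\<^sup>+y. H (1 / (n + y)) * ennreal (1 / (n + y)\<^sup>2) * indicator {0..1} y \<partial>lborel)"
proof -
  define g where "g y = 1 / (n + 1 - y)" for y
  define g' where "g' y = 1 / (n + 1 - y)\<^sup>2" for y
  have deriv: "(g has_real_derivative g' y) (at y)" if "y \<in> {0..1}" for y
  proof -
    have "n + 1 - y \<noteq> 0" using that n by auto
    then show ?thesis unfolding g_def g'_def
      by (auto intro!: derivative_eq_intros simp: power2_eq_square field_simps)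
  qed
  have "continuous_on {0..1} g'" unfolding g'_def using n by (intro continuous_intros) auto
  from nn_integral_substitution_aux[OF _ _ deriv this]
  have "(\<integral>\<^sup>+x. H x * indicator {g 0..g 1} x \<partial>lborel)
      = (\<integral>\<^sup>+y. H (g y) * ennreal (g' y) * indicator {0..1} y \<partial>lborel)"
    by (auto simp: g'_def)
  also have "\<dots> = (\<integral>\<^sup>+y. H (g (1 - y)) * ennreal (g' (1 - y)) * indicator {0..1} (1 - y) \<partial>lborel)"
    using nn_integral_real_affine[where c="-1" and t=1
        and f="\<lambda>y. H (g y) * ennreal (g' y) * indicator {0..1} y"]
    unfolding g_def g'_def by simp
  also have "\<dots> = (\<integral>\<^sup>+y. H (1 / (n + y)) * ennreal (1 / (n + y)\<^sup>2) * indicator {0..1} y \<partial>lborel)"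
    by (intro nn_integral_cong) (auto simp: g_def g'_def indicator_def)
  finally show ?thesis by (simp add: g_def)
qed

lemma ennreal_term_le_suminf: "(f :: nat \<Rightarrow> ennreal) n \<le> suminf f"
  using sum_le_suminf[OF summableI, of "{n}" f] by simp

lemma frac_inverse_branch:
  assumes "0 < x" "x \<le> 1"
  obtains m :: nat where "x \<in> {1 / (real (Suc m) + 1)..1 / real (Suc m)}"
    and "frac (1 / x) = 1 / x - real (Suc m)"
proof -
  define N where "N = nat \<lfloor>1 / x\<rfloor>"
  have "1 \<le> 1 / x" using assms by (simp add: field_simps)
  then have "1 \<le> \<lfloor>1 / x\<rfloor>" by (simp add: le_floor_iff)
  then have N: "real N = of_int \<lfloor>1 / x\<rfloor>" "1 \<le> N" unfolding N_def by linarith+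
  then have "real N \<le> 1 / x" "1 / x < real N + 1" by linarith+
  then have "x \<in> {1 / (real N + 1)..1 / real N}"
    using assms N(2) by (auto simp: field_simps)
  moreover have "frac (1 / x) = 1 / x - real N" using N(1) by (simp add: frac_def)
  moreover obtain m where "N = Suc m" using N(2) by (cases N) auto
  ultimately show ?thesis using that by simp
qed

lemma nn_integral_frac_inverse_le:
  fixes K F :: "real \<Rightarrow> ennreal"
  assumes [measurable]: "K \<in> borel_measurable borel" "F \<in> borel_measurable borel"
  shows "(\<integral>\<^sup>+x. K x * F (frac (1 / x)) * indicator {0<..1} x \<partial>lborel)
    \<le> (\<integral>\<^sup>+y. (\<Sum>m. K (1 / (real (Suc m) + y)) * ennreal (1 / (real (Suc m) + y)\<^sup>2))
          * F y * indicator {0..1} y \<partial>lborel)"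
proof -
  define G where "G m x = K x * F (1 / x - real (Suc m))
    * indicator {1 / (real (Suc m) + 1)..1 / real (Suc m)} x" for m x
  have "(\<integral>\<^sup>+x. K x * F (frac (1 / x)) * indicator {0<..1} x \<partial>lborel) \<le> (\<integral>\<^sup>+x. (\<Sum>m. G m x) \<partial>lborel)"
  proof (rule nn_integral_mono)
    fix x :: real
    show "K x * F (frac (1 / x)) * indicator {0<..1} x \<le> (\<Sum>m. G m x)"
    proof (cases "0 < x \<and> x \<le> 1")
      case True
      then obtain m where "x \<in> {1 / (real (Suc m) + 1)..1 / real (Suc m)}"
        and "frac (1 / x) = 1 / x - real (Suc m)"
        by (blast elim: frac_inverse_branch)
      then have "K x * F (frac (1 / x)) * indicator {0<..1} x = G m x"
        using True unfolding G_def by simp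
      then show ?thesis using ennreal_term_le_suminf[of "\<lambda>m. G m x" m] by simp
    qed simp
  qed
  also have "\<dots> = (\<Sum>m. \<integral>\<^sup>+x. G m x \<partial>lborel)"
    by (rule nn_integral_suminf) (simp add: G_def)
  also have "\<dots> = (\<Sum>m. \<integral>\<^sup>+y. K (1 / (real (Suc m) + y)) * ennreal (1 / (real (Suc m) + y)\<^sup>2)
          * F y * indicator {0..1} y \<partial>lborel)"
  proof (rule suminf_cong)
    fix m
    define n where "n = real (Suc m)"
    have "(\<integral>\<^sup>+x. G m x \<partial>lborel)
        = (\<integral>\<^sup>+x. K x * F (1 / x - n) * indicator {1 / (n + 1)..1 / n} x \<partial>lborel)"
      unfolding G_def n_def ..
    also have "\<dots> = (\<integral>\<^sup>+y. K (1 / (n + y)) * F (1 / (1 / (n + y)) - n) * ennreal (1 / (n + y)\<^sup>2)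
        * indicator {0..1} y \<partial>lborel)"
      by (rule nn_integral_inverse_branch) (auto simp: n_def)
    also have "\<dots> = (\<integral>\<^sup>+y. K (1 / (n + y)) * ennreal (1 / (n + y)\<^sup>2) * F y * indicator {0..1} y \<partial>lborel)"
      by (intro nn_integral_cong) (auto simp: n_def indicator_def ac_simps)
    finally show "(\<integral>\<^sup>+x. G m x \<partial>lborel) = (\<integral>\<^sup>+y. K (1 / (real (Suc m) + y))
        * ennreal (1 / (real (Suc m) + y)\<^sup>2) * F y * indicator {0..1} y \<partial>lborel)"
      unfolding n_def .
  qed
  also have "\<dots> = (\<integral>\<^sup>+y. (\<Sum>m. K (1 / (real (Suc m) + y)) * ennreal (1 / (real (Suc m) + y)\<^sup>2)
          * F y * indicator {0..1} y) \<partial>lborel)"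
    by (rule nn_integral_suminf[symmetric]) simp
  finally show ?thesis by (simp add: ennreal_suminf_multc)
qed

subsection \<open>A weighted \<open>L\<^sup>p\<close> norm contracted by the operator\<close>

definition pow_integral :: "real \<Rightarrow> (real \<Rightarrow> complex) \<Rightarrow> ennreal" where
  "pow_integral p u = (\<integral>\<^sup>+x. ennreal (cmod (u x) powr p) \<partial>mu)"

definition weighted_pow_integral :: "real \<Rightarrow> (real \<Rightarrow> complex) \<Rightarrow> ennreal" where
  "weighted_pow_integral p u =
    (\<integral>\<^sup>+x. ennreal (weight x powr p) * ennreal (cmod (u x) powr p) \<partial>mu)"

lemma in_Lp_iff: "in_Lp p u \<longleftrightarrow> u \<in> borel_measurable borel \<and> pow_integral p u < \<infinity>"
  unfolding in_Lp_def pow_integral_def measurable_mu_iff ..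

lemma Lp_norm_eq: "Lp_norm p u = enn2real (pow_integral p u) powr (1 / p)"
  unfolding Lp_norm_def pow_integral_def ..

lemma weighted_nn_integral_le:
  assumes "0 \<le> p"
  shows "(\<integral>\<^sup>+x. ennreal (weight x powr p) * G x \<partial>mu) \<le> (\<integral>\<^sup>+x. G x \<partial>mu)"
proof (rule nn_integral_mono)
  fix x
  have "weight x powr p \<le> 1" using assms weight_bounds[of x] weight_pos[of x] by (simp add: powr_le1)
  then show "ennreal (weight x powr p) * G x \<le> G x"
    using mult_right_mono[of "ennreal (weight x powr p)" 1 "G x"] by simp
qed

lemma nn_integral_le_weighted:
  assumes [measurable]: "G \<in> borel_measurable borel" and "0 \<le> p"
  shows "(\<integral>\<^sup>+x. G x \<partial>mu) \<le> ennreal (3 powr p) * (\<integral>\<^sup>+x. ennreal (weight x powr p) * G x \<partial>mu)"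
proof -
  have "1 \<le> 3 powr p * weight x powr p" for x
  proof -
    have "(1/3) powr p \<le> weight x powr p"
      using assms weight_bounds(1)[of x] by (intro powr_mono2) auto
    then have "3 powr p * (1/3) powr p \<le> 3 powr p * weight x powr p" by (intro mult_left_mono) auto
    then show ?thesis by (simp add: powr_divide)
  qed
  then have "G x \<le> ennreal (3 powr p) * (ennreal (weight x powr p) * G x)" for x
    using mult_right_mono[OF ennreal_leI[OF \<open>1 \<le> 3 powr p * weight x powr p\<close>], of "G x"]
    by (simp add: ennreal_mult mult.assoc)
  then have "(\<integral>\<^sup>+x. G x \<partial>mu) \<le> (\<integral>\<^sup>+x. ennreal (3 powr p) * (ennreal (weight x powr p) * G x) \<partial>mu)"
    by (intro nn_integral_mono)
  also have "\<dots> = ennreal (3 powr p) * (\<integral>\<^sup>+x. ennreal (weight x powr p) * G x \<partial>mu)"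
    by (rule nn_integral_cmult) (simp add: measurable_mu_iff)
  finally show ?thesis .
qed

definition weighted_density :: "real \<Rightarrow> real \<Rightarrow> real" where
  "weighted_density p x = weight x powr p * mu_density x"

lemma weighted_density_nonneg: "0 \<le> weighted_density p x"
  unfolding weighted_density_def using mu_density_nonneg by simp

lemma weighted_density_measurable [measurable]: "weighted_density p \<in> borel_measurable borel"
  unfolding weighted_density_def by measurable

lemma weighted_pow_integral_eq_lborel:
  assumes [measurable]: "u \<in> borel_measurable borel"
  shows "weighted_pow_integral p u
    = (\<integral>\<^sup>+x. ennreal (weighted_density p x) * ennreal (cmod (u x) powr p) \<partial>lborel)"
  unfolding weighted_pow_integral_def mu_eq_density weighted_density_def
  using mu_density_nonneg by (subst nn_integral_density) (auto simp: ennreal_mult ac_simps)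

lemma branch_density_le:
  fixes m :: nat
  assumes y: "0 < y" "y < 1" and p: "1 \<le> p"
  defines "x \<equiv> 1 / (real (Suc m) + y)"
  shows "weighted_density p x * x powr p * (1 / (real (Suc m) + y)\<^sup>2)
    \<le> golden_conj powr p * weight y powr p / 2 * branch_term y m"
proof -
  define n where "n = real (Suc m)"
  define R where "R = branch_ratio n y"
  have ny: "1 < n + y" using y unfolding n_def by simp
  have x: "0 < x" "x < 1" unfolding x_def n_def[symmetric] using ny by auto
  have R: "0 \<le> R" "R \<le> 1"
    using branch_ratio_nonneg[of n y] branch_ratio_le_one[of "Suc m" y] y unfolding R_def n_def by auto
  have "x * (1 - x) = (n + y - 1) / (n + y)\<^sup>2"
    unfolding x_def n_def[symmetric] using ny by (simp add: field_simps power2_eq_square)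
  then have "sqrt (x * (1 - x)) = sqrt (n + y - 1) / (n + y)"
    using ny by (simp add: real_sqrt_divide)
  then have density: "mu_density x * (1 / (n + y)\<^sup>2) = 1 / (2 * ((n + y) * sqrt (n + y - 1)))"
    unfolding mu_density_def using x ny by (simp add: power2_eq_square)
  have "x * weight x = golden_conj * weight y * R"
    unfolding R_def branch_ratio_def x_def n_def using golden_conj_pos weight_pos[of y] by simp
  then have "weight x powr p * x powr p = (golden_conj * weight y) powr p * R powr p"
    using x weight_pos[of x] by (simp add: powr_mult[symmetric] mult.commute)
  also have "\<dots> \<le> (golden_conj * weight y) powr p * R"
  proof -
    have "R powr p \<le> R" using R p by (cases "R = 0") (auto intro: powr_le_one_le)
    then show ?thesis by (intro mult_left_mono) auto
  qed
  also have "\<dots> = golden_conj powr p * weight y powr p * R"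
    using golden_conj_pos weight_pos[of y] by (simp add: powr_mult)
  finally have "mu_density x * (weight x powr p * x powr p) * (1 / (n + y)\<^sup>2)
      \<le> mu_density x * (golden_conj powr p * weight y powr p * R) * (1 / (n + y)\<^sup>2)"
    using mu_density_nonneg[of x] by (intro mult_right_mono mult_left_mono) auto
  also have "\<dots> = golden_conj powr p * weight y powr p * R * (mu_density x * (1 / (n + y)\<^sup>2))"
    by (simp only: ac_simps)
  also have "\<dots> = golden_conj powr p * weight y powr p / 2 * branch_term y m"
    unfolding density R_def branch_term_def n_def[symmetric] by simp
  finally show ?thesis unfolding n_def weighted_density_def by (simp add: ac_simps)
qed

lemma weight_transfer_le:
  assumes y: "0 < y" "y < 1" and p: "1 \<le> p"
  shows "(\<Sum>m. ennreal (weighted_density p (1 / (real (Suc m) + y)) * (1 / (real (Suc m) + y)) powr p)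
      * ennreal (1 / (real (Suc m) + y)\<^sup>2))
    \<le> ennreal (golden_conj powr p * weighted_density p y)"
proof -
  define c where "c = golden_conj powr p * weight y powr p / 2"
  have c: "0 \<le> c" unfolding c_def by simp
  note sums = branch_term_sums_le[OF y]
  have "(\<Sum>m. ennreal (weighted_density p (1 / (real (Suc m) + y)) * (1 / (real (Suc m) + y)) powr p)
      * ennreal (1 / (real (Suc m) + y)\<^sup>2)) \<le> (\<Sum>m. ennreal (c * branch_term y m))"
    using branch_density_le[OF y p] weighted_density_nonneg unfolding c_def
    by (intro suminf_le) (auto simp: ennreal_mult[symmetric] intro!: ennreal_leI)
  also have "\<dots> = ennreal (c * suminf (branch_term y))"
    using sums c branch_term_nonneg[of y] y
    by (simp add: suminf_ennreal2 summable_mult suminf_mult)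
  also have "\<dots> \<le> ennreal (c * (1 / (sqrt y * sqrt (1 - y))))"
    using sums c by (intro ennreal_leI mult_left_mono) auto
  also have "c * (1 / (sqrt y * sqrt (1 - y))) = golden_conj powr p * weighted_density p y"
    unfolding c_def weighted_density_def mu_density_def using y by (simp add: real_sqrt_mult)
  finally show ?thesis .
qed

lemma nn_integral_weight_transfer_le:
  fixes F :: "real \<Rightarrow> ennreal"
  assumes [measurable]: "F \<in> borel_measurable borel" and p: "1 \<le> p"
  shows "(\<integral>\<^sup>+y. (\<Sum>m. ennreal (weighted_density p (1 / (real (Suc m) + y)) * (1 / (real (Suc m) + y)) powr p)
      * ennreal (1 / (real (Suc m) + y)\<^sup>2)) * F y * indicator {0..1} y \<partial>lborel)
    \<le> ennreal (golden_conj powr p) * (\<integral>\<^sup>+y. ennreal (weighted_density p y) * F y \<partial>lborel)"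
    (is "(\<integral>\<^sup>+y. ?S y * F y * indicator {0..1} y \<partial>lborel) \<le> _")
proof -
  have "?S y * F y * indicator {0..1} y
      \<le> ennreal (golden_conj powr p) * (ennreal (weighted_density p y) * F y)" if "y \<notin> {0, 1}" for y
  proof (cases "y \<in> {0..1}")
    case True
    with that have y: "0 < y" "y < 1" by auto
    from mult_right_mono[OF weight_transfer_le[OF y p], of "F y"] True
    show ?thesis using weighted_density_nonneg by (simp add: ennreal_mult mult.assoc)
  qed simp
  moreover have "AE y in lborel. y \<notin> {0, 1}"
    by (intro AE_I'[of "{0, 1}"] countable_imp_null_set_lborel) auto
  ultimately have "(\<integral>\<^sup>+y. ?S y * F y * indicator {0..1} y \<partial>lborel)
      \<le> (\<integral>\<^sup>+y. ennreal (golden_conj powr p) * (ennreal (weighted_density p y) * F y) \<partial>lborel)"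
    by (intro nn_integral_mono_AE) (auto elim: AE_mp)
  also have "\<dots> = ennreal (golden_conj powr p) * (\<integral>\<^sup>+y. ennreal (weighted_density p y) * F y \<partial>lborel)"
    by (rule nn_integral_cmult) simp
  finally show ?thesis .
qed

lemma Top_measurable [measurable]:
  assumes [measurable]: "u \<in> borel_measurable borel"
  shows "Top u \<in> borel_measurable borel"
  unfolding Top_def[abs_def] by measurable

lemma weighted_pow_integral_Top_le:
  assumes [measurable]: "u \<in> borel_measurable borel" and p: "1 \<le> p"
  shows "weighted_pow_integral p (Top u) \<le> ennreal (golden_conj powr p) * weighted_pow_integral p u"
proof -
  define K where "K x = ennreal (weighted_density p x * x powr p)" for x
  define F where "F y = ennreal (cmod (u y) powr p)" for y
  have "weighted_pow_integral p (Top u) = (\<integral>\<^sup>+x. K x * F (frac (1 / x)) * indicator {0<..1} x \<partial>lborel)"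
    unfolding weighted_pow_integral_eq_lborel[OF Top_measurable[OF assms(1)]]
    using weighted_density_nonneg
    by (intro nn_integral_cong) (auto simp: K_def F_def Top_def norm_mult powr_mult ennreal_mult mult.assoc)
  also have "\<dots> \<le> (\<integral>\<^sup>+y. (\<Sum>m. K (1 / (real (Suc m) + y)) * ennreal (1 / (real (Suc m) + y)\<^sup>2))
      * F y * indicator {0..1} y \<partial>lborel)"
    by (rule nn_integral_frac_inverse_le) (simp_all add: K_def F_def weighted_density_def)
  also have "\<dots> \<le> ennreal (golden_conj powr p) * (\<integral>\<^sup>+y. ennreal (weighted_density p y) * F y \<partial>lborel)"
    unfolding K_def by (rule nn_integral_weight_transfer_le) (simp_all add: F_def p)
  also have "\<dots> = ennreal (golden_conj powr p) * weighted_pow_integral p u"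
    unfolding weighted_pow_integral_eq_lborel[OF assms(1)] F_def ..
  finally show ?thesis .
qed

lemma weighted_pow_integral_le: "0 \<le> p \<Longrightarrow> weighted_pow_integral p u \<le> pow_integral p u"
  unfolding weighted_pow_integral_def pow_integral_def by (rule weighted_nn_integral_le)

lemma pow_integral_le_weighted:
  assumes "u \<in> borel_measurable borel" "0 \<le> p"
  shows "pow_integral p u \<le> ennreal (3 powr p) * weighted_pow_integral p u"
  unfolding weighted_pow_integral_def pow_integral_def
  by (rule nn_integral_le_weighted) (use assms in simp_all)

subsection \<open>Boundedness and the spectral radius\<close>

lemma pow_integral_Top_le:
  assumes p: "1 \<le> p" and u: "u \<in> borel_measurable borel"
  shows "pow_integral p (Top u) \<le> ennreal ((3 * golden_conj) powr p) * pow_integral p u"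
proof -
  have "pow_integral p (Top u) \<le> ennreal (3 powr p) * weighted_pow_integral p (Top u)"
    using p u by (intro pow_integral_le_weighted) auto
  also have "\<dots> \<le> ennreal (3 powr p) * (ennreal (golden_conj powr p) * weighted_pow_integral p u)"
    using weighted_pow_integral_Top_le[OF u p] by (intro mult_left_mono) auto
  also have "\<dots> \<le> ennreal (3 powr p) * (ennreal (golden_conj powr p) * pow_integral p u)"
    using weighted_pow_integral_le[of p u] p by (intro mult_left_mono) auto
  also have "\<dots> = ennreal ((3 * golden_conj) powr p) * pow_integral p u"
    using golden_conj_pos by (simp add: powr_mult ennreal_mult mult.assoc)
  finally show ?thesis .
qed

lemma bounded_on_LpI:
  assumes p: "0 < p" and C: "0 \<le> C"
    and S: "\<And>u. in_Lp p u \<Longrightarrow>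
      S u \<in> borel_measurable borel \<and> pow_integral p (S u) \<le> ennreal (C powr p) * pow_integral p u"
  shows "bounded_on_Lp p S"
  unfolding bounded_on_Lp_def
proof (intro exI allI impI conjI)
  fix u assume u: "in_Lp p u"
  then have fin: "ennreal (C powr p) * pow_integral p u < \<infinity>"
    by (simp add: in_Lp_iff ennreal_mult_less_top)
  have le: "pow_integral p (S u) \<le> ennreal (C powr p) * pow_integral p u" using S[OF u] by simp
  with fin S[OF u] show "in_Lp p (S u)" unfolding in_Lp_iff by simp
  have "enn2real (pow_integral p (S u)) \<le> enn2real (ennreal (C powr p) * pow_integral p u)"
    using le fin by (intro enn2real_mono) auto
  then have "enn2real (pow_integral p (S u)) \<le> C powr p * enn2real (pow_integral p u)"
    by (simp add: enn2real_mult)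
  then have "Lp_norm p (S u) \<le> (C powr p * enn2real (pow_integral p u)) powr (1 / p)"
    unfolding Lp_norm_eq using p by (intro powr_mono2) auto
  also have "\<dots> = C * Lp_norm p u"
    unfolding Lp_norm_eq using p C by (simp add: powr_mult powr_powr)
  finally show "Lp_norm p (S u) \<le> C * Lp_norm p u" .
qed

lemma bounded_on_Lp_Top: "1 \<le> p \<Longrightarrow> bounded_on_Lp p Top"
  using golden_conj_pos pow_integral_Top_le
  by (intro bounded_on_LpI[where C = "3 * golden_conj"]) (auto simp: in_Lp_iff)

lemma Top_eigenfunction_eq_zero:
  assumes p: "1 \<le> p" and l: "golden_conj < cmod l" and u: "in_Lp p u"
    and eigen: "AE x in mu. Top u x = l * u x"
  shows "AE x in mu. u x = 0"
proof -
  have um [measurable]: "u \<in> borel_measurable borel" using u by (simp add: in_Lp_iff)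
  define W where "W = weighted_pow_integral p u"
  have "weighted_pow_integral p (Top u)
      = (\<integral>\<^sup>+x. ennreal (cmod l powr p) * (ennreal (weight x powr p) * ennreal (cmod (u x) powr p)) \<partial>mu)"
    unfolding weighted_pow_integral_def using eigen
    by (intro nn_integral_cong_AE) (auto simp: norm_mult powr_mult ennreal_mult ac_simps)
  also have "\<dots> = ennreal (cmod l powr p) * W"
    unfolding W_def weighted_pow_integral_def by (rule nn_integral_cmult) (simp add: measurable_mu_iff)
  finally have "ennreal (cmod l powr p) * W \<le> ennreal (golden_conj powr p) * W"
    using weighted_pow_integral_Top_le[OF um p] unfolding W_def by simp
  moreover have "W < \<infinity>"
    using weighted_pow_integral_le[of p u] u p unfolding W_def in_Lp_iff by (simp add: le_less_trans)
  moreover have "golden_conj powr p < cmod l powr p"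
    using l golden_conj_pos p by (intro powr_less_mono2) auto
  ultimately have "W = 0"
    by (cases W) (auto simp: ennreal_mult[symmetric] ennreal_le_iff golden_conj_pos mult_le_cancel_right)
  then have "AE x in mu. ennreal (weight x powr p) * ennreal (cmod (u x) powr p) = 0"
    unfolding W_def weighted_pow_integral_def
    by (subst (asm) nn_integral_0_iff_AE) (auto simp: measurable_mu_iff)
  then show ?thesis
  proof (rule AE_mp, intro AE_I2 impI)
    fix x assume "ennreal (weight x powr p) * ennreal (cmod (u x) powr p) = 0"
    with weight_pos[of x] show "u x = 0" by (auto simp: ennreal_mult'[symmetric])
  qed
qed

lemma Top_iterate_Suc:
  assumes "0 < x" "x \<le> 1"
  shows "(Top ^^ Suc n) f x = of_real x * (Top ^^ n) f (frac (1 / x))"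
  using assms by (simp add: Top_def)

lemma Top_iterate_measurable [measurable]:
  assumes [measurable]: "f \<in> borel_measurable borel"
  shows "(Top ^^ n) f \<in> borel_measurable borel"
  by (induction n) auto

lemma weighted_pow_integral_Top_iterate_le:
  assumes [measurable]: "f \<in> borel_measurable borel" and p: "1 \<le> p"
  shows "weighted_pow_integral p ((Top ^^ n) f)
    \<le> ennreal (golden_conj powr p) ^ n * weighted_pow_integral p f"
proof (induction n)
  case (Suc n)
  have "weighted_pow_integral p ((Top ^^ Suc n) f)
      \<le> ennreal (golden_conj powr p) * weighted_pow_integral p ((Top ^^ n) f)"
    using weighted_pow_integral_Top_le[OF _ p] by simp
  also have "\<dots>
      \<le> ennreal (golden_conj powr p) * (ennreal (golden_conj powr p) ^ n * weighted_pow_integral p f)"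
    using Suc by (intro mult_left_mono) auto
  finally show ?case by (simp add: mult.assoc)
qed simp

lemma realpow_powr: "0 \<le> (x::real) \<Longrightarrow> (x ^ n) powr p = (x powr p) ^ n"
  by (induction n) (auto simp: powr_mult)

lemma weighted_orbit_series_le:
  assumes [measurable]: "f \<in> borel_measurable borel" and p: "1 \<le> p" and r: "golden_conj < r"
  shows "(\<integral>\<^sup>+x. ennreal (weight x powr p) * (\<Sum>n. ennreal ((cmod ((Top ^^ n) f x) / r ^ n) powr p)) \<partial>mu)
    \<le> ennreal (1 / (1 - (golden_conj / r) powr p)) * weighted_pow_integral p f"
proof -
  define q where "q = (golden_conj / r) powr p"
  have r0: "0 < r" using r golden_conj_pos by simp
  have q: "0 \<le> q" "q < 1"
    unfolding q_def using r golden_conj_pos p powr_less_mono2[of p "golden_conj / r" 1] by auto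
  have scale: "(cmod a / r ^ n) powr p = ((1 / r) powr p) ^ n * cmod a powr p" for a and n :: nat
  proof -
    have "(cmod a / r ^ n) powr p = cmod a powr p / (r powr p) ^ n"
      using r0 by (simp add: powr_divide realpow_powr)
    also have "\<dots> = ((1 / r) powr p) ^ n * cmod a powr p"
      using r0 by (simp add: powr_divide power_one_over)
    finally show ?thesis .
  qed
  have "(\<integral>\<^sup>+x. ennreal (weight x powr p) * (\<Sum>n. ennreal ((cmod ((Top ^^ n) f x) / r ^ n) powr p)) \<partial>mu)
      = (\<Sum>n. ennreal (((1 / r) powr p) ^ n) * weighted_pow_integral p ((Top ^^ n) f))"
    unfolding weighted_pow_integral_def scale
    by (simp add: nn_integral_suminf[symmetric] measurable_mu_iff nn_integral_cmult[symmetric]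
        ennreal_mult ac_simps)
  also have "\<dots> \<le> (\<Sum>n. ennreal (q ^ n) * weighted_pow_integral p f)"
  proof (intro suminf_le summableI)
    fix n
    have "q ^ n = ((1 / r) powr p) ^ n * (golden_conj powr p) ^ n"
      unfolding q_def power_mult_distrib[symmetric]
      using r0 golden_conj_pos by (simp add: powr_mult[symmetric])
    then have "ennreal (q ^ n) = ennreal (((1 / r) powr p) ^ n) * ennreal (golden_conj powr p) ^ n"
      by (simp add: ennreal_mult ennreal_power)
    then show "ennreal (((1 / r) powr p) ^ n) * weighted_pow_integral p ((Top ^^ n) f)
        \<le> ennreal (q ^ n) * weighted_pow_integral p f"
      using weighted_pow_integral_Top_iterate_le[OF _ p]
      by (simp add: mult_left_mono mult.assoc)
  qed
  also have "\<dots> = ennreal (1 / (1 - q)) * weighted_pow_integral p f"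
    using q by (simp add: ennreal_suminf_multc suminf_ennreal2 suminf_geometric)
  finally show ?thesis unfolding q_def .
qed

lemma orbit_series_integral_finite:
  assumes p: "1 \<le> p" and r: "golden_conj < r" and f: "in_Lp p f"
  shows "(\<integral>\<^sup>+x. (\<Sum>n. ennreal ((cmod ((Top ^^ n) f x) / r ^ n) powr p)) \<partial>mu) < \<infinity>"
proof -
  have [measurable]: "f \<in> borel_measurable borel" and fin: "pow_integral p f < \<infinity>"
    using f by (auto simp: in_Lp_iff)
  have "(\<integral>\<^sup>+x. (\<Sum>n. ennreal ((cmod ((Top ^^ n) f x) / r ^ n) powr p)) \<partial>mu)
      \<le> ennreal (3 powr p) * (\<integral>\<^sup>+x. ennreal (weight x powr p)
          * (\<Sum>n. ennreal ((cmod ((Top ^^ n) f x) / r ^ n) powr p)) \<partial>mu)"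
    using p by (intro nn_integral_le_weighted) auto
  also have "\<dots> \<le> ennreal (3 powr p)
      * (ennreal (1 / (1 - (golden_conj / r) powr p)) * weighted_pow_integral p f)"
    using weighted_orbit_series_le[OF _ p r] by (intro mult_left_mono) auto
  also have "\<dots> < \<infinity>"
    using weighted_pow_integral_le[of p f] fin p
    by (simp add: ennreal_mult_less_top le_less_trans)
  finally show ?thesis .
qed

lemma ennreal_suminf_powr_term_le:
  assumes p: "0 < p" and b: "\<And>n. 0 \<le> b n" and fin: "(\<Sum>n. ennreal (b n powr p)) \<noteq> \<infinity>"
  shows "b n \<le> enn2real (\<Sum>n. ennreal (b n powr p)) powr (1 / p)"
proof -
  have "ennreal (b n powr p) \<le> (\<Sum>n. ennreal (b n powr p))" by (rule ennreal_term_le_suminf)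
  then have "b n powr p \<le> enn2real (\<Sum>n. ennreal (b n powr p))"
    using fin enn2real_mono[of "ennreal (b n powr p)"] by (simp add: less_top)
  then have "(b n powr p) powr (1 / p) \<le> enn2real (\<Sum>n. ennreal (b n powr p)) powr (1 / p)"
    using p by (intro powr_mono2) auto
  then show ?thesis using p b[of n] by (simp add: powr_powr)
qed

lemma geometrically_dominated_series:
  fixes a :: "nat \<Rightarrow> 'a::{real_normed_field, banach}"
  assumes a: "\<And>n. norm (a n) \<le> M * r ^ n" and r: "0 \<le> r" "r < norm l"
  shows "summable (\<lambda>n. a n / l ^ n)" and "norm (\<Sum>n. a n / l ^ Suc n) \<le> M / (norm l - r)"
proof -
  define L where "L = norm l"
  have L: "0 < L" using r unfolding L_def by linarith
  have "norm (a 0) \<le> M" using a[of 0] by simp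
  then have M: "0 \<le> M" using norm_ge_zero order_trans by blast
  have ratio: "norm (r / L) < 1" using r L by (simp add: L_def)
  have bound: "norm (a n / l ^ Suc n) \<le> M / L * (r / L) ^ n" for n
  proof -
    have "norm (a n / l ^ Suc n) = norm (a n) / L ^ Suc n"
      unfolding L_def by (simp add: norm_divide norm_mult norm_power)
    also have "\<dots> \<le> M * r ^ n / L ^ Suc n" using a[of n] L by (intro divide_right_mono) auto
    also have "\<dots> = M / L * (r / L) ^ n" by (simp add: power_divide)
    finally show ?thesis .
  qed
  have geom: "summable (\<lambda>n. M / L * (r / L) ^ n)"
    using ratio by (intro summable_mult summable_geometric)
  have norm_summable: "summable (\<lambda>n. norm (a n / l ^ Suc n))"
    by (rule summable_comparison_test[OF _ geom]) (use bound in auto)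
  then have "summable (\<lambda>n. l * (a n / l ^ Suc n))"
    by (rule summable_mult[OF summable_norm_cancel])
  moreover have "l * (a n / l ^ Suc n) = a n / l ^ n" for n using L by (simp add: L_def)
  ultimately show "summable (\<lambda>n. a n / l ^ n)" by simp
  have "norm (\<Sum>n. a n / l ^ Suc n) \<le> (\<Sum>n. norm (a n / l ^ Suc n))"
    by (rule summable_norm[OF norm_summable])
  also have "\<dots> \<le> (\<Sum>n. M / L * (r / L) ^ n)" by (rule suminf_le[OF bound norm_summable geom])
  also have "\<dots> = M / L * (1 / (1 - r / L))"
    by (subst suminf_mult[OF summable_geometric[OF ratio]]) (simp only: suminf_geometric[OF ratio])
  also have "\<dots> = M / (L - r)" using L r by (simp add: field_simps)
  finally show "norm (\<Sum>n. a n / l ^ Suc n) \<le> M / (norm l - r)" unfolding L_def .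
qed

lemma Top_neumann_series:
  assumes x: "0 < x" "x \<le> 1" and l: "l \<noteq> 0"
    and summable: "summable (\<lambda>n. (Top ^^ n) f x / l ^ n)"
  defines "U \<equiv> \<lambda>y. - (\<Sum>n. (Top ^^ n) f y / l ^ Suc n)"
  shows "Top U x - l * U x = f x"
proof -
  define a where "a n = (Top ^^ n) f x / l ^ n" for n
  have a: "summable a" using summable unfolding a_def .
  then have a_Suc: "summable (\<lambda>n. a (Suc n))" by (subst summable_Suc_iff)
  have x0: "of_real x \<noteq> (0 :: complex)" using x by simp
  have shift: "(Top ^^ n) f (frac (1 / x)) / l ^ Suc n = a (Suc n) / of_real x" for n
    using x0 unfolding a_def Top_iterate_Suc[OF x] by simp
  have unshift: "(Top ^^ n) f x / l ^ Suc n = a n / l" for n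
    unfolding a_def by simp
  have "U (frac (1 / x)) = - ((\<Sum>n. a (Suc n)) / of_real x)"
    unfolding U_def shift suminf_divide[OF a_Suc] ..
  then have "Top U x = - (\<Sum>n. a (Suc n))"
    using x x0 unfolding Top_def by simp
  moreover have "U x = - (suminf a / l)"
    unfolding U_def unshift suminf_divide[OF a] ..
  ultimately show ?thesis using suminf_split_head[OF a] l by (simp add: a_def)
qed

lemma in_Lp_if_dominated:
  fixes U :: "real \<Rightarrow> complex" and E :: "real \<Rightarrow> ennreal"
  assumes p: "0 < p" and [measurable]: "U \<in> borel_measurable borel" "E \<in> borel_measurable borel"
    and E: "(\<integral>\<^sup>+x. E x \<partial>mu) < \<infinity>" and C: "0 \<le> C"
    and dom: "AE x in mu. E x \<noteq> \<infinity> \<longrightarrow> cmod (U x) \<le> C * enn2real (E x) powr (1 / p)"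
  shows "in_Lp p U"
proof -
  have "AE x in mu. E x \<noteq> \<infinity>"
    by (rule nn_integral_PInf_AE) (use E in \<open>auto simp: measurable_mu_iff\<close>)
  with dom have "AE x in mu. ennreal (cmod (U x) powr p) \<le> ennreal (C powr p) * E x"
  proof eventually_elim
    case (elim x)
    then have "cmod (U x) powr p \<le> (C * enn2real (E x) powr (1 / p)) powr p"
      using p by (intro powr_mono2) auto
    also have "\<dots> = C powr p * enn2real (E x)" using p C by (simp add: powr_mult powr_powr)
    finally have "ennreal (cmod (U x) powr p) \<le> ennreal (C powr p * enn2real (E x))"
      by (rule ennreal_leI)
    also have "\<dots> = ennreal (C powr p) * E x" using elim by (simp add: ennreal_mult less_top)
    finally show ?case .
  qed
  then have "pow_integral p U \<le> (\<integral>\<^sup>+x. ennreal (C powr p) * E x \<partial>mu)"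
    unfolding pow_integral_def by (rule nn_integral_mono_AE)
  also have "\<dots> < \<infinity>"
    using E by (simp add: nn_integral_cmult measurable_mu_iff ennreal_mult_less_top)
  finally show ?thesis by (simp add: in_Lp_iff)
qed

lemma Top_minus_surj:
  assumes p: "1 \<le> p" and l: "golden_conj < cmod l" and f: "in_Lp p f"
  shows "\<exists>u. in_Lp p u \<and> (AE x in mu. Top u x - l * u x = f x)"
proof -
  have [measurable]: "f \<in> borel_measurable borel" using f by (simp add: in_Lp_iff)
  define r where "r = (cmod l + golden_conj) / 2"
  have r: "golden_conj < r" "r < cmod l" "0 < r" using l golden_conj_pos unfolding r_def by auto
  define E where "E x = (\<Sum>n. ennreal ((cmod ((Top ^^ n) f x) / r ^ n) powr p))" for x
  define U where "U y = - (\<Sum>n. (Top ^^ n) f y / l ^ Suc n)" for y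
  have [measurable]: "E \<in> borel_measurable borel" "U \<in> borel_measurable borel"
    unfolding E_def U_def by measurable
  have series: "summable (\<lambda>n. (Top ^^ n) f x / l ^ n)
      \<and> cmod (U x) \<le> 1 / (cmod l - r) * enn2real (E x) powr (1 / p)"
    if "E x \<noteq> \<infinity>" for x
  proof -
    have "cmod ((Top ^^ n) f x) \<le> enn2real (E x) powr (1 / p) * r ^ n" for n
    proof -
      have "cmod ((Top ^^ n) f x) / r ^ n \<le> enn2real (E x) powr (1 / p)"
        unfolding E_def by (rule ennreal_suminf_powr_term_le) (use that p r in \<open>auto simp: E_def\<close>)
      then show ?thesis using r by (simp add: divide_le_eq)
    qed
    from geometrically_dominated_series[OF this] r show ?thesis unfolding U_def by simp
  qed
  have E_finite: "(\<integral>\<^sup>+x. E x \<partial>mu) < \<infinity>"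
    unfolding E_def by (rule orbit_series_integral_finite[OF p r(1) f])
  then have "in_Lp p U"
    using p r series by (intro in_Lp_if_dominated[where C = "1 / (cmod l - r)"]) auto
  moreover have "AE x in mu. E x \<noteq> \<infinity>"
    by (rule nn_integral_PInf_AE) (use E_finite in \<open>auto simp: measurable_mu_iff\<close>)
  with AE_mu_open_unit have "AE x in mu. Top U x - l * U x = f x"
  proof eventually_elim
    case (elim x)
    have "l \<noteq> 0" using l golden_conj_pos by auto
    with elim show ?case unfolding U_def by (intro Top_neumann_series) (auto simp: series)
  qed
  ultimately show ?thesis by blast
qed

lemma Lp_spectrum_Top_le:
  assumes p: "1 \<le> p" and "l \<in> Lp_spectrum p Top"
  shows "cmod l \<le> golden_conj"
proof (rule ccontr)
  assume "\<not> cmod l \<le> golden_conj"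
  then have l: "golden_conj < cmod l" by simp
  have "AE x in mu. u x = 0" if "in_Lp p u" "AE x in mu. Top u x - l * u x = 0" for u
    using that(2) by (intro Top_eigenfunction_eq_zero[OF p l that(1)]) auto
  then have "invertible_on_Lp p (\<lambda>u x. Top u x - l * u x)"
    unfolding invertible_on_Lp_def using Top_minus_surj[OF p l] by blast
  with assms show False unfolding Lp_spectrum_def by simp
qed

theorem proposition4p6:
  fixes p :: real
  assumes "p \<ge> 1"
  shows "bounded_on_Lp p Top \<and> Lp_spectral_radius p Top \<le> ereal ((sqrt 5 - 1) / 2)"
proof
  show "bounded_on_Lp p Top" using assms by (rule bounded_on_Lp_Top)
  show "Lp_spectral_radius p Top \<le> ereal ((sqrt 5 - 1) / 2)"
    unfolding Lp_spectral_radius_def golden_conj_def[symmetric]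
    using Lp_spectrum_Top_le[OF assms] by (auto intro: SUP_least)
qed

end
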